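(* Let $E$ be a reflexive, strictly convex Banach space and $C$ a closed convex subset of $E$. Suppose that $\mathcal{S}=\{T_s:s\in S\}$ is a representation of a semigroup $S$ on $C$ by nonexpansive self-mappings. Then the following are equivalent: (1) there is a closed, $S$-invariant convex subset $C_0$ of $C$ such that $A_{C_0}(\mathcal{S})\neq\emptyset$; (2) $S$ has a common fixed point in $C$.
   Context: A representation of a semigroup $S$ on $C$ is a family of maps $T_s:C\to C$ with $T_{st}=T_s\circ T_t$ for $s,t\in S$; it is nonexpansive if $\|T_sx-T_sy\|\le\|x-y\|$ for all $s\in S$, $x,y\in C$. A subset $C_0\subseteq C$ is $S$-invariant if $T_s(C_0)\subseteq C_0$ for all $s$. For a subset $D\subseteq C$, $A_D(\mathcal{S})$ is the set of all $a\in E$ with $\|a-T_sx\|\le\|a-x\|$ for all $x\in D$, $s\in S$ (attractive points for $D$). A common fixed point is $x\in C$ with $T_sx=x$ for all $s\in S$. *)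

theory Defs
  imports "HOL-Analysis.Analysis"
begin

definition reflexive_space :: "'a::real_normed_vector itself \<Rightarrow> bool" where
  "reflexive_space _ \<longleftrightarrow>
     (\<forall>\<phi> :: ('a \<Rightarrow>\<^sub>L real) \<Rightarrow>\<^sub>L real. \<exists>x::'a. \<forall>f. blinfun_apply \<phi> f = blinfun_apply f x)"

text \<open>Strict convexity: the open segment between distinct unit vectors lies in the open unit ball
  (here: the midpoint has norm < 1, the standard definition).\<close>
definition strictly_convex_space :: "'a::real_normed_vector itself \<Rightarrow> bool" where
  "strictly_convex_space _ \<longleftrightarrow>
     (\<forall>x y :: 'a. norm x = 1 \<and> norm y = 1 \<and> x \<noteq> y \<longrightarrow> norm ((1/2) *\<^sub>R (x + y)) < 1)"

definition semigroup_representation ::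
  "('s::semigroup_mult \<Rightarrow> 'a \<Rightarrow> 'a) \<Rightarrow> 'a set \<Rightarrow> bool" where
  "semigroup_representation T C \<longleftrightarrow>
     (\<forall>s. T s ` C \<subseteq> C) \<and> (\<forall>s t. \<forall>x\<in>C. T (s * t) x = T s (T t x))"

definition nonexpansive_rep :: "('s \<Rightarrow> 'a::real_normed_vector \<Rightarrow> 'a) \<Rightarrow> 'a set \<Rightarrow> bool" where
  "nonexpansive_rep T C \<longleftrightarrow> (\<forall>s. \<forall>x\<in>C. \<forall>y\<in>C. norm (T s x - T s y) \<le> norm (x - y))"

definition S_invariant :: "('s \<Rightarrow> 'a \<Rightarrow> 'a) \<Rightarrow> 'a set \<Rightarrow> bool" where
  "S_invariant T C0 \<longleftrightarrow> (\<forall>s. T s ` C0 \<subseteq> C0)"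

definition attractive_points :: "('s \<Rightarrow> 'a::real_normed_vector \<Rightarrow> 'a) \<Rightarrow> 'a set \<Rightarrow> 'a set" where
  "attractive_points T D = {a. \<forall>x\<in>D. \<forall>s. norm (a - T s x) \<le> norm (a - x)}"

end

theory Submission
  imports Defs
begin

text \<open>If \<open>a\<close> is an attractive point for the invariant closed convex set \<open>C\<^sub>0\<close> and \<open>z\<close> is
  the point of \<open>C\<^sub>0\<close> nearest to \<open>a\<close>, then each \<open>T\<^sub>s z\<close> lies in \<open>C\<^sub>0\<close> and is at least as
  close to \<open>a\<close>, so it is again a nearest point and equals \<open>z\<close> by strict convexity.
  Reflexivity provides the nearest point: for a bounded minimizing sequence \<open>x\<^sub>n\<close>,
  Hahn--Banach applied to the sublinear functional \<open>f \<mapsto> limsup f(x\<^sub>n)\<close> on the dual gives an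
  element of the bidual, hence a point \<open>z\<close> with \<open>f z \<le> limsup f(x\<^sub>n)\<close> for all \<open>f\<close>; by the
  separation theorem \<open>z\<close> lies in every closed convex set containing a tail of the sequence.
  Conversely, a common fixed point \<open>x\<close> is attractive for \<open>C\<^sub>0 = {x}\<close>.\<close>

text \<open>A dominated subspace is the graph of a linear functional on a subspace of the domain,
  lying below \<open>Q\<close>; single-valuedness is a consequence.\<close>

definition dominated_subspace :: "('a::real_vector \<Rightarrow> real) \<Rightarrow> ('a \<times> real) set \<Rightarrow> bool" where
  "dominated_subspace Q G \<longleftrightarrow> subspace G \<and> (\<forall>v r. (v, r) \<in> G \<longrightarrow> r \<le> Q v)"

lemma dominated_subspace_combination:
  assumes "dominated_subspace Q G" "(v, r) \<in> G" "(w, s) \<in> G"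
  shows "(a *\<^sub>R v + b *\<^sub>R w, a * r + b * s) \<in> G"
proof -
  have "a *\<^sub>R (v, r) + b *\<^sub>R (w, s) \<in> G"
    using assms unfolding dominated_subspace_def by (metis subspace_add subspace_scale)
  then show ?thesis by simp
qed

lemma dominated_subspace_le: "dominated_subspace Q G \<Longrightarrow> (v, r) \<in> G \<Longrightarrow> r \<le> Q v"
  unfolding dominated_subspace_def by blast

lemma dominated_subspace_single_valued:
  assumes G: "dominated_subspace Q G" and "(v, r) \<in> G" "(v, s) \<in> G"
  shows "r = s"
proof (rule ccontr)
  assume "r \<noteq> s"
  define c where "c = (Q 0 + 1) / (r - s)"
  have "(c *\<^sub>R v + (- c) *\<^sub>R v, c * r + (- c) * s) \<in> G"
    using dominated_subspace_combination[OF assms] .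
  then have "c * (r - s) \<le> Q 0"
    using dominated_subspace_le[OF G] by (fastforce simp: algebra_simps)
  with \<open>r \<noteq> s\<close> show False by (simp add: c_def)
qed

lemma dominated_subspace_extension_bound:
  assumes Q: "convex_on UNIV Q" and G: "dominated_subspace Q G"
    and "(m, r) \<in> G" "(m', r') \<in> G" "0 < s" "0 < t"
  shows "(r' - Q (m' - s *\<^sub>R y)) / s \<le> (Q (m + t *\<^sub>R y) - r) / t"
proof -
  define a where "a = s / (s + t)"
  have a: "0 \<le> a" "0 \<le> 1 - a" "(s + t) * a = s" "(s + t) * (1 - a) = t"
    using assms(5,6) by (auto simp: a_def field_simps)
  have "a * r + (1 - a) * r' \<le> Q (a *\<^sub>R m + (1 - a) *\<^sub>R m')"
    using dominated_subspace_le[OF G dominated_subspace_combination[OF G assms(3,4)]] .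
  also have "a *\<^sub>R m + (1 - a) *\<^sub>R m' = a *\<^sub>R (m + t *\<^sub>R y) + (1 - a) *\<^sub>R (m' - s *\<^sub>R y)"
  proof -
    have "a * t = (1 - a) * s"
      using a by (metis mult.commute mult.left_commute)
    then have "a *\<^sub>R (t *\<^sub>R y) = (1 - a) *\<^sub>R (s *\<^sub>R y)"
      by simp
    then show ?thesis by (simp add: algebra_simps)
  qed
  also have "Q \<dots> \<le> a * Q (m + t *\<^sub>R y) + (1 - a) * Q (m' - s *\<^sub>R y)"
    using Q a(1,2) unfolding convex_on_def by auto
  finally have "(s + t) * (a * r + (1 - a) * r')
      \<le> (s + t) * (a * Q (m + t *\<^sub>R y) + (1 - a) * Q (m' - s *\<^sub>R y))"
    using assms(5,6) by simp
  then have "s * r + t * r' \<le> s * Q (m + t *\<^sub>R y) + t * Q (m' - s *\<^sub>R y)"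
    using a(3,4) by (simp add: distrib_left flip: mult.assoc)
  then have "t * (r' - Q (m' - s *\<^sub>R y)) \<le> s * (Q (m + t *\<^sub>R y) - r)"
    by (simp add: algebra_simps)
  then show ?thesis
    using assms(5,6) by (simp add: divide_le_eq le_divide_eq mult.commute)
qed

lemma dominated_subspace_extension_slope:
  assumes Q: "convex_on UNIV Q" and G: "dominated_subspace Q G"
  obtains c where "\<And>m r t. (m, r) \<in> G \<Longrightarrow> 0 < t \<Longrightarrow> r + t * c \<le> Q (m + t *\<^sub>R y)"
    and "\<And>m r t. (m, r) \<in> G \<Longrightarrow> 0 < t \<Longrightarrow> r - t * c \<le> Q (m - t *\<^sub>R y)"
proof -
  define L where "L = {(r - Q (m - t *\<^sub>R y)) / t | m r t. (m, r) \<in> G \<and> 0 < t}"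
  define U where "U = {(Q (m + t *\<^sub>R y) - r) / t | m r t. (m, r) \<in> G \<and> 0 < t}"
  have LU: "l \<le> u" if "l \<in> L" "u \<in> U" for l u
    using that dominated_subspace_extension_bound[OF Q G] unfolding L_def U_def by blast
  have "(0, 0) \<in> G"
    using G unfolding dominated_subspace_def by (simp add: subspace_0 flip: zero_prod_def)
  then have "(Q (0 + 1 *\<^sub>R y) - 0) / 1 \<in> U" "(0 - Q (0 - 1 *\<^sub>R y)) / 1 \<in> L"
    unfolding L_def U_def using zero_less_one by blast+
  then have "Q y \<in> U" "- Q (- y) \<in> L"
    by simp_all
  define c where "c = Sup L"
  have "l \<le> c" if "l \<in> L" for l
    unfolding c_def using LU \<open>Q y \<in> U\<close> that by (intro cSup_upper bdd_above.I) auto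
  moreover have "c \<le> u" if "u \<in> U" for u
    unfolding c_def using LU \<open>- Q (- y) \<in> L\<close> that by (intro cSup_least) auto
  ultimately show ?thesis
  proof (intro that)
    fix m r and t :: real assume "\<And>u. u \<in> U \<Longrightarrow> c \<le> u" "(m, r) \<in> G" "0 < t"
    then have "c \<le> (Q (m + t *\<^sub>R y) - r) / t"
      unfolding U_def by blast
    with \<open>0 < t\<close> show "r + t * c \<le> Q (m + t *\<^sub>R y)"
      by (simp add: le_divide_eq algebra_simps)
  next
    fix m r and t :: real assume "\<And>l. l \<in> L \<Longrightarrow> l \<le> c" "(m, r) \<in> G" "0 < t"
    then have "(r - Q (m - t *\<^sub>R y)) / t \<le> c"
      unfolding L_def by blast
    with \<open>0 < t\<close> show "r - t * c \<le> Q (m - t *\<^sub>R y)"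
      by (simp add: divide_le_eq algebra_simps)
  qed
qed

lemma dominated_subspace_extend:
  assumes Q: "convex_on UNIV Q" and G: "dominated_subspace Q G"
  shows "\<exists>G'. dominated_subspace Q G' \<and> G \<subseteq> G' \<and> (\<exists>c. (y, c) \<in> G')"
proof -
  obtain c where c_upper: "\<And>m r t. (m, r) \<in> G \<Longrightarrow> 0 < t \<Longrightarrow> r + t * c \<le> Q (m + t *\<^sub>R y)"
    and c_lower: "\<And>m r t. (m, r) \<in> G \<Longrightarrow> 0 < t \<Longrightarrow> r - t * c \<le> Q (m - t *\<^sub>R y)"
    using dominated_subspace_extension_slope[OF Q G] by blast
  define G' where "G' = {p + q | p q. p \<in> G \<and> q \<in> span {(y, c)}}"
  have G'_iff: "(v, r) \<in> G' \<longleftrightarrow> (\<exists>m r0 t. (m, r0) \<in> G \<and> v = m + t *\<^sub>R y \<and> r = r0 + t * c)"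
    for v r
    unfolding G'_def span_singleton by force
  have "(0, 0) \<in> G"
    using G unfolding dominated_subspace_def by (simp add: subspace_0 flip: zero_prod_def)
  have "subspace G'"
    unfolding G'_def using G unfolding dominated_subspace_def by (blast intro: subspace_sums)
  moreover have "r \<le> Q v" if "(v, r) \<in> G'" for v r
  proof -
    obtain m r0 t where v: "v = m + t *\<^sub>R y" "r = r0 + t * c" "(m, r0) \<in> G"
      using \<open>(v, r) \<in> G'\<close> unfolding G'_iff by blast
    consider "0 < t" | "t = 0" | "0 < - t" by linarith
    then show ?thesis
    proof cases
      case 1
      then show ?thesis using c_upper v by simp
    next
      case 2
      then show ?thesis using dominated_subspace_le[OF G] v by simp
    next
      case 3
      then show ?thesis using c_lower[OF v(3) 3] v by simp
    qed
  qed
  moreover have "G \<subseteq> G'"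
  proof (rule subrelI)
    fix m r assume "(m, r) \<in> G"
    then show "(m, r) \<in> G'"
      unfolding G'_iff by (intro exI[of _ m] exI[of _ r] exI[of _ 0]) simp
  qed
  moreover have "(y, c) \<in> G'"
    unfolding G'_iff using \<open>(0, 0) \<in> G\<close> by (intro exI[of _ 0] exI[of _ 0] exI[of _ 1]) simp
  ultimately show ?thesis
    unfolding dominated_subspace_def by blast
qed

lemma dominated_subspace_chain_Union:
  assumes "C \<noteq> {}" "subset.chain {G. dominated_subspace Q G} C"
  shows "dominated_subspace Q (\<Union>C)"
proof -
  have C: "\<And>G. G \<in> C \<Longrightarrow> dominated_subspace Q G" "\<And>G H. G \<in> C \<Longrightarrow> H \<in> C \<Longrightarrow> G \<subseteq> H \<or> H \<subseteq> G"
    using assms(2) unfolding subset.chain_def by blast+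
  have "subspace (\<Union>C)"
  proof (rule subspaceI)
    show "0 \<in> \<Union>C"
      using assms(1) C(1) unfolding dominated_subspace_def by (blast intro: subspace_0)
  next
    fix p q assume "p \<in> \<Union>C" "q \<in> \<Union>C"
    then obtain G H where "G \<in> C" "H \<in> C" "p \<in> G" "q \<in> H"
      by blast
    with C(2) consider "p \<in> H" | "q \<in> G"
      by blast
    then show "p + q \<in> \<Union>C"
      using C(1) \<open>G \<in> C\<close> \<open>H \<in> C\<close> \<open>p \<in> G\<close> \<open>q \<in> H\<close>
      unfolding dominated_subspace_def by cases (blast intro: subspace_add)+
  next
    fix a p assume "p \<in> \<Union>C"
    with C(1) show "a *\<^sub>R p \<in> \<Union>C"
      unfolding dominated_subspace_def by (blast intro: subspace_scale)
  qed
  with C(1) show ?thesis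
    unfolding dominated_subspace_def by blast
qed

lemma dominated_subspace_total_linear:
  assumes G: "dominated_subspace Q G" and total: "\<And>v. \<exists>r. (v, r) \<in> G"
  shows "\<exists>f. linear f \<and> (\<forall>v. f v \<le> Q v)"
proof -
  obtain f where f: "\<And>v. (v, f v) \<in> G"
    using total by metis
  have f_eq: "f v = r" if "(v, r) \<in> G" for v r
    using dominated_subspace_single_valued[OF G f that] .
  have "linear f"
  proof (rule linearI)
    fix u v
    show "f (u + v) = f u + f v"
      using f_eq dominated_subspace_combination[OF G f f, where a=1 and b=1] by simp
  next
    fix a u
    show "f (a *\<^sub>R u) = a *\<^sub>R f u"
      using f_eq dominated_subspace_combination[OF G f f, where a=a and b=0] by simp
  qed
  then show ?thesis
    using dominated_subspace_le[OF G f] by blast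
qed

theorem hahn_banach_linear_minorant:
  assumes Q: "convex_on UNIV Q" and "0 \<le> Q 0"
  shows "\<exists>f. linear f \<and> (\<forall>v. f v \<le> Q v)"
proof -
  have "dominated_subspace Q {0}"
    using assms(2) unfolding dominated_subspace_def by (simp add: prod_eq_iff)
  then have "\<exists>M\<in>{G. dominated_subspace Q G}. \<forall>G\<in>{G. dominated_subspace Q G}. M \<subseteq> G \<longrightarrow> G = M"
    by (intro subset_Zorn_nonempty) (auto intro: dominated_subspace_chain_Union)
  then obtain M where M: "dominated_subspace Q M"
    and maximal: "\<And>G. dominated_subspace Q G \<Longrightarrow> M \<subseteq> G \<Longrightarrow> G = M"
    by blast
  have "\<exists>r. (v, r) \<in> M" for v
    using dominated_subspace_extend[OF Q M, of v] maximal by blast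
  then show ?thesis
    using dominated_subspace_total_linear[OF M] by blast
qed

lemma bounded_linear_if_upper_bound:
  fixes f :: "'a::real_normed_vector \<Rightarrow> real"
  assumes f: "linear f" and le: "\<And>v. f v \<le> norm v * B"
  shows "bounded_linear f"
proof (rule bounded_linear_intro[where K = B])
  show "f (u + v) = f u + f v" "f (r *\<^sub>R u) = r *\<^sub>R f u" for u v r
    using f by (simp_all add: linear_add linear_scale)
next
  fix v
  have "- f v \<le> norm v * B"
    using le[of "- v"] f by (simp add: linear_neg)
  then show "norm (f v) \<le> norm v * B"
    using le[of v] by simp
qed

lemma infdist_less_obtain:
  assumes "A \<noteq> {}" "infdist x A < d"
  obtains a where "a \<in> A" "dist x a < d"
proof -
  have "(INF a\<in>A. dist x a) < d"
    using assms by (simp add: infdist_notempty)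
  then show ?thesis
    using that assms(1) cINF_less_iff[of A "\<lambda>a. dist x a" d] by (auto intro: bdd_belowI2[of _ 0])
qed

lemma convex_on_infdist:
  fixes K :: "'a::real_normed_vector set"
  assumes "convex K"
  shows "convex_on UNIV (\<lambda>x. infdist x K)"
proof (cases "K = {}")
  case True
  then show ?thesis by (simp add: infdist_def convex_on_const)
next
  case False
  show ?thesis
  proof (rule convex_onI)
    fix t :: real and u w :: 'a assume t: "0 < t" "t < 1"
    show "infdist ((1 - t) *\<^sub>R u + t *\<^sub>R w) K \<le> (1 - t) * infdist u K + t * infdist w K"
    proof (rule field_le_epsilon)
      fix e :: real assume "0 < e"
      obtain k1 where k1: "k1 \<in> K" "dist u k1 < infdist u K + e"
        using infdist_less_obtain[OF False, of u "infdist u K + e"] \<open>0 < e\<close> by auto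
      obtain k2 where k2: "k2 \<in> K" "dist w k2 < infdist w K + e"
        using infdist_less_obtain[OF False, of w "infdist w K + e"] \<open>0 < e\<close> by auto
      have "(1 - t) *\<^sub>R k1 + t *\<^sub>R k2 \<in> K"
        using assms k1(1) k2(1) t by (simp add: convexD)
      then have "infdist ((1 - t) *\<^sub>R u + t *\<^sub>R w) K
          \<le> dist ((1 - t) *\<^sub>R u + t *\<^sub>R w) ((1 - t) *\<^sub>R k1 + t *\<^sub>R k2)"
        by (rule infdist_le)
      also have "\<dots> = norm ((1 - t) *\<^sub>R (u - k1) + t *\<^sub>R (w - k2))"
        by (simp add: dist_norm algebra_simps)
      also have "\<dots> \<le> (1 - t) * dist u k1 + t * dist w k2"
        using norm_triangle_ineq[of "(1 - t) *\<^sub>R (u - k1)" "t *\<^sub>R (w - k2)"] t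
        by (simp add: dist_norm)
      also have "\<dots> \<le> (1 - t) * (infdist u K + e) + t * (infdist w K + e)"
        using k1 k2 t by (intro add_mono mult_left_mono) auto
      finally show "infdist ((1 - t) *\<^sub>R u + t *\<^sub>R w) K \<le> (1 - t) * infdist u K + t * infdist w K + e"
        by (simp add: algebra_simps)
    qed
  qed simp
qed

lemma infdist_separating_functional:
  fixes K :: "'a::real_normed_vector set"
  assumes "convex K"
  obtains f where "bounded_linear f" "\<And>y. y \<in> K \<Longrightarrow> f y + infdist x K \<le> f x"
proof -
  define Q where "Q v = infdist (x + v) K - infdist x K" for v
  have "convex_on UNIV Q"
  proof (rule convex_onI)
    fix t :: real and u v :: 'a assume "0 < t" "t < 1"
    moreover have "x + ((1 - t) *\<^sub>R u + t *\<^sub>R v) = (1 - t) *\<^sub>R (x + u) + t *\<^sub>R (x + v)"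
      by (simp add: algebra_simps)
    ultimately show "Q ((1 - t) *\<^sub>R u + t *\<^sub>R v) \<le> (1 - t) * Q u + t * Q v"
      using convex_onD[OF convex_on_infdist[OF assms], of t "x + u" "x + v"]
      unfolding Q_def by (simp add: algebra_simps)
  qed simp
  then obtain f where f: "linear f" "\<And>v. f v \<le> Q v"
    using hahn_banach_linear_minorant[of Q] by (auto simp: Q_def)
  have "Q v \<le> norm v" for v
    using infdist_triangle[of "x + v" K x] unfolding Q_def by (simp add: dist_norm)
  then have "bounded_linear f"
    using f by (intro bounded_linear_if_upper_bound[where B = 1]) (auto intro: order_trans)
  moreover have "f y + infdist x K \<le> f x" if "y \<in> K" for y
    using f(2)[of "y - x"] that unfolding Q_def by (simp add: linear_diff[OF f(1)])
  ultimately show ?thesis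
    using that by blast
qed

text \<open>Since \<open>real_of_ereal\<close> sends \<open>\<plusminus>\<infinity>\<close> to \<open>0\<close>, this is meaningful only for bounded
  sequences, where the limsup is finite.\<close>

definition limsup_functional :: "(nat \<Rightarrow> 'a::real_normed_vector) \<Rightarrow> ('a \<Rightarrow>\<^sub>L real) \<Rightarrow> real" where
  "limsup_functional xs f = real_of_ereal (limsup (\<lambda>n. ereal (blinfun_apply f (xs n))))"

lemma limsup_functional_finite:
  assumes bounded: "\<And>n. norm (xs n) \<le> B"
  shows "limsup (\<lambda>n. ereal (blinfun_apply f (xs n))) = ereal (limsup_functional xs f)"
proof -
  have "\<bar>blinfun_apply f (xs n)\<bar> \<le> norm f * B" for n
    using norm_blinfun[of f "xs n"] mult_left_mono[OF bounded[of n], of "norm f"] by simp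
  then have "\<forall>n. ereal (blinfun_apply f (xs n)) \<le> ereal (norm f * B)"
    and "\<forall>n. ereal (- (norm f * B)) \<le> ereal (blinfun_apply f (xs n))"
    by (auto simp: abs_le_iff minus_le_iff)
  then have "limsup (\<lambda>n. ereal (blinfun_apply f (xs n))) \<le> ereal (norm f * B)"
    and "ereal (- (norm f * B)) \<le> limsup (\<lambda>n. ereal (blinfun_apply f (xs n)))"
    by (auto intro: Limsup_bounded le_Limsup always_eventually)
  then show ?thesis
    unfolding limsup_functional_def by (cases "limsup (\<lambda>n. ereal (blinfun_apply f (xs n)))") auto
qed

lemma limsup_functional_le:
  assumes bounded: "\<And>n. norm (xs n) \<le> B" and "eventually (\<lambda>n. blinfun_apply f (xs n) \<le> c) sequentially"
  shows "limsup_functional xs f \<le> c"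
proof -
  have "limsup (\<lambda>n. ereal (blinfun_apply f (xs n))) \<le> ereal c"
    using assms(2) by (intro Limsup_bounded) auto
  then show ?thesis
    using limsup_functional_finite[OF bounded] by simp
qed

lemma convex_on_limsup_functional:
  assumes bounded: "\<And>n. norm (xs n) \<le> B"
  shows "convex_on UNIV (limsup_functional xs)"
proof (rule convex_onI)
  fix t :: real and f g :: "'a \<Rightarrow>\<^sub>L real" assume "0 < t" "t < 1"
  let ?L = "\<lambda>f. limsup (\<lambda>n. ereal (blinfun_apply f (xs n)))"
  have scale: "?L (c *\<^sub>R h) = ereal c * ?L h" if "0 \<le> c" for c h
    using Limsup_ereal_mult_left[of sequentially c "\<lambda>n. ereal (blinfun_apply h (xs n))"] that
    by (simp add: blinfun.scaleR_left)
  have "?L ((1 - t) *\<^sub>R f + t *\<^sub>R g) \<le> ?L ((1 - t) *\<^sub>R f) + ?L (t *\<^sub>R g)"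
    unfolding blinfun.add_left plus_ereal.simps(1)[symmetric] by (rule ereal_limsup_add_mono)
  also have "\<dots> = ereal (1 - t) * ?L f + ereal t * ?L g"
    using \<open>0 < t\<close> \<open>t < 1\<close> by (simp add: scale)
  finally show "limsup_functional xs ((1 - t) *\<^sub>R f + t *\<^sub>R g)
      \<le> (1 - t) * limsup_functional xs f + t * limsup_functional xs g"
    by (simp add: limsup_functional_finite[OF bounded])
qed simp

definition weak_limsup_point :: "(nat \<Rightarrow> 'a::real_normed_vector) \<Rightarrow> 'a \<Rightarrow> bool" where
  "weak_limsup_point xs z \<longleftrightarrow>
     (\<forall>f :: 'a \<Rightarrow>\<^sub>L real. \<forall>c. eventually (\<lambda>n. blinfun_apply f (xs n) \<le> c) sequentially
        \<longrightarrow> blinfun_apply f z \<le> c)"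

lemma reflexive_weak_limsup_point_exists:
  fixes xs :: "nat \<Rightarrow> 'a::real_normed_vector"
  assumes refl: "reflexive_space TYPE('a)" and bounded: "\<And>n. norm (xs n) \<le> B"
  obtains z where "weak_limsup_point xs z"
proof -
  have "limsup_functional xs 0 = 0"
    by (simp add: limsup_functional_def Limsup_const)
  moreover have "convex_on UNIV (limsup_functional xs)"
    using bounded by (rule convex_on_limsup_functional)
  ultimately obtain \<phi> where \<phi>: "linear \<phi>" "\<And>f. \<phi> f \<le> limsup_functional xs f"
    using hahn_banach_linear_minorant[of "limsup_functional xs"] by auto
  have "limsup_functional xs f \<le> norm f * B" for f
  proof (rule limsup_functional_le[OF bounded], intro always_eventually allI)
    fix n
    have "blinfun_apply f (xs n) \<le> norm f * norm (xs n)"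
      using norm_blinfun[of f "xs n"] by simp
    also have "\<dots> \<le> norm f * B"
      using bounded by (simp add: mult_left_mono)
    finally show "blinfun_apply f (xs n) \<le> norm f * B" .
  qed
  then have "bounded_linear \<phi>"
    using \<phi> by (intro bounded_linear_if_upper_bound[where B = B]) (auto intro: order_trans)
  then have "\<phi> = blinfun_apply (Blinfun \<phi>)"
    by (simp add: bounded_linear_Blinfun_apply)
  moreover obtain z where "\<forall>f. blinfun_apply (Blinfun \<phi>) f = blinfun_apply f z"
    using refl unfolding reflexive_space_def by blast
  ultimately have \<phi>_eval: "\<phi> f = blinfun_apply f z" for f
    by simp
  show ?thesis
  proof (rule that, unfold weak_limsup_point_def, intro allI impI)
    fix f :: "'a \<Rightarrow>\<^sub>L real" and c :: real
    assume "eventually (\<lambda>n. blinfun_apply f (xs n) \<le> c) sequentially"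
    then have "limsup_functional xs f \<le> c"
      by (rule limsup_functional_le[OF bounded])
    then show "blinfun_apply f z \<le> c"
      using \<phi>(2)[of f] \<phi>_eval[of f] by simp
  qed
qed

lemma weak_limsup_point_mem_closed_convex:
  assumes K: "closed K" "convex K" and z: "weak_limsup_point xs z"
    and ev: "eventually (\<lambda>n. xs n \<in> K) sequentially"
  shows "z \<in> K"
proof (rule ccontr)
  assume "z \<notin> K"
  have "K \<noteq> {}"
    using eventually_happens'[OF sequentially_bot ev] by blast
  then have "infdist z K > 0"
    using K(1) \<open>z \<notin> K\<close> by (simp add: infdist_pos_not_in_closed)
  obtain f where f: "bounded_linear f" "\<And>y. y \<in> K \<Longrightarrow> f y + infdist z K \<le> f z"
    using infdist_separating_functional[OF K(2)] by blast
  have "eventually (\<lambda>n. blinfun_apply (Blinfun f) (xs n) \<le> f z - infdist z K) sequentially"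
  proof (rule eventually_mono[OF ev])
    fix n assume "xs n \<in> K"
    then show "blinfun_apply (Blinfun f) (xs n) \<le> f z - infdist z K"
      using f(2) unfolding bounded_linear_Blinfun_apply[OF f(1)] by (simp add: le_diff_eq)
  qed
  then have "f z \<le> f z - infdist z K"
    using z f(1) unfolding weak_limsup_point_def by (metis bounded_linear_Blinfun_apply)
  with \<open>infdist z K > 0\<close> show False
    by simp
qed

lemma reflexive_nearest_point_exists:
  fixes K :: "'a::real_normed_vector set"
  assumes refl: "reflexive_space TYPE('a)" and K: "closed K" "convex K" "K \<noteq> {}"
  obtains z where "z \<in> K" "dist a z = infdist a K"
proof -
  define d where "d = infdist a K"
  have "\<exists>k\<in>K. dist a k < d + inverse (real (Suc n))" for n
    using infdist_less_obtain[OF K(3), of a "d + inverse (real (Suc n))"] unfolding d_def by auto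
  then obtain xs where xs: "\<And>n. xs n \<in> K" "\<And>n. dist a (xs n) < d + inverse (real (Suc n))"
    by metis
  have "norm (xs n) \<le> norm a + (d + 1)" for n
  proof -
    have "inverse (real (Suc n)) \<le> 1"
      by (simp add: inverse_le_1_iff)
    then have "dist a (xs n) \<le> d + 1"
      using xs(2)[of n] by linarith
    then show ?thesis
      using norm_triangle_sub[of "xs n" a] by (simp add: dist_norm norm_minus_commute)
  qed
  then obtain z where z: "weak_limsup_point xs z"
    using reflexive_weak_limsup_point_exists[OF refl] by blast
  have z_mem: "z \<in> K \<inter> cball a r" if "d < r" for r
  proof (rule weak_limsup_point_mem_closed_convex[OF _ _ z])
    have "(\<lambda>n. d + inverse (real (Suc n))) \<longlonglongrightarrow> d"
      using tendsto_add[OF tendsto_const LIMSEQ_inverse_real_of_nat, of d] by simp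
    then have "eventually (\<lambda>n. d + inverse (real (Suc n)) < r) sequentially"
      using \<open>d < r\<close> by (rule order_tendstoD)
    then show "eventually (\<lambda>n. xs n \<in> K \<inter> cball a r) sequentially"
    proof (rule eventually_mono)
      fix n assume "d + inverse (real (Suc n)) < r"
      then show "xs n \<in> K \<inter> cball a r"
        using xs(1)[of n] xs(2)[of n] by simp
    qed
  qed (simp_all add: K closed_Int convex_Int)
  have "dist a z \<le> d"
  proof (rule field_le_epsilon)
    fix e :: real assume "0 < e"
    then show "dist a z \<le> d + e"
      using z_mem[of "d + e"] by simp
  qed
  moreover have "z \<in> K" "d \<le> dist a z"
    using z_mem[of "d + 1"] unfolding d_def by (auto intro: infdist_le)
  ultimately show ?thesis
    using that unfolding d_def by (metis order_antisym)
qed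

lemma strictly_convex_nearest_point_unique:
  fixes K :: "'a::real_normed_vector set"
  assumes sc: "strictly_convex_space TYPE('a)" and K: "convex K"
    and z1: "z1 \<in> K" "dist a z1 = infdist a K" and z2: "z2 \<in> K" "dist a z2 = infdist a K"
  shows "z1 = z2"
proof (rule ccontr)
  assume "z1 \<noteq> z2"
  define d where "d = infdist a K"
  have "d \<noteq> 0"
  proof
    assume "d = 0"
    then have "z1 = a" "z2 = a"
      using z1(2) z2(2) unfolding d_def by simp_all
    with \<open>z1 \<noteq> z2\<close> show False
      by simp
  qed
  then have "d > 0"
    using infdist_nonneg[of a K] unfolding d_def by linarith
  define u w where "u = (1 / d) *\<^sub>R (a - z1)" and "w = (1 / d) *\<^sub>R (a - z2)"
  have "norm u = 1" "norm w = 1" "u \<noteq> w"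
    using z1 z2 \<open>z1 \<noteq> z2\<close> \<open>d > 0\<close> unfolding u_def w_def d_def by (auto simp: dist_norm)
  then have "norm ((1 / 2) *\<^sub>R (u + w)) < 1"
    using sc unfolding strictly_convex_space_def by blast
  moreover define m where "m = (1 / 2) *\<^sub>R z1 + (1 / 2) *\<^sub>R z2"
  moreover have "a - m = (1 / 2) *\<^sub>R ((a - z1) + (a - z2))"
    unfolding m_def by (simp add: algebra_simps flip: scaleR_add_left)
  then have "(1 / 2) *\<^sub>R (u + w) = (1 / d) *\<^sub>R (a - m)"
    unfolding u_def w_def by (simp add: scaleR_add_right mult.commute)
  ultimately have "dist a m < d"
    using \<open>d > 0\<close> by (simp add: dist_norm)
  moreover have "m \<in> K"
    using convexD[OF K z1(1) z2(1), of "1 / 2" "1 / 2"] unfolding m_def by simp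
  ultimately show False
    unfolding d_def using infdist_le[of m K a] by simp
qed

lemma attractive_point_nearest_point_fixed:
  fixes T :: "'s \<Rightarrow> 'a::real_normed_vector \<Rightarrow> 'a"
  assumes "strictly_convex_space TYPE('a)" "convex C0" "S_invariant T C0"
    and a: "a \<in> attractive_points T C0" and z: "z \<in> C0" "dist a z = infdist a C0"
  shows "T s z = z"
proof (rule strictly_convex_nearest_point_unique[OF assms(1,2) _ _ z])
  show Tz: "T s z \<in> C0"
    using assms(3) z(1) unfolding S_invariant_def by blast
  have "dist a (T s z) \<le> dist a z"
    using a z(1) unfolding attractive_points_def by (simp add: dist_norm)
  with z(2) infdist_le[OF Tz, of a] show "dist a (T s z) = infdist a C0"
    by simp
qed

theorem proposition3p4:
  fixes C :: "'a::banach set" and T :: "'s::semigroup_mult \<Rightarrow> 'a \<Rightarrow> 'a"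
  assumes "reflexive_space TYPE('a)"
    and "strictly_convex_space TYPE('a)"
    and "closed C" and "convex C"
    and "semigroup_representation T C"
    and "nonexpansive_rep T C"
  shows "(\<exists>C0. C0 \<subseteq> C \<and> C0 \<noteq> {} \<and> closed C0 \<and> convex C0 \<and> S_invariant T C0
              \<and> attractive_points T C0 \<noteq> {})
         \<longleftrightarrow> (\<exists>x\<in>C. \<forall>s. T s x = x)"
proof
  assume "\<exists>C0. C0 \<subseteq> C \<and> C0 \<noteq> {} \<and> closed C0 \<and> convex C0 \<and> S_invariant T C0
              \<and> attractive_points T C0 \<noteq> {}"
  then obtain C0 a where C0: "C0 \<subseteq> C" "C0 \<noteq> {}" "closed C0" "convex C0" "S_invariant T C0"
    and a: "a \<in> attractive_points T C0"
    by blast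
  obtain z where z: "z \<in> C0" "dist a z = infdist a C0"
    using reflexive_nearest_point_exists[OF assms(1) C0(3,4,2)] by blast
  then have "T s z = z" for s
    using attractive_point_nearest_point_fixed[OF assms(2) C0(4,5) a] by blast
  with z(1) C0(1) show "\<exists>x\<in>C. \<forall>s. T s x = x"
    by blast
next
  assume "\<exists>x\<in>C. \<forall>s. T s x = x"
  then obtain x where "x \<in> C" "\<forall>s. T s x = x"
    by blast
  then have "S_invariant T {x}" "x \<in> attractive_points T {x}"
    unfolding S_invariant_def attractive_points_def by simp_all
  with \<open>x \<in> C\<close> show "\<exists>C0. C0 \<subseteq> C \<and> C0 \<noteq> {} \<and> closed C0 \<and> convex C0 \<and> S_invariant T C0
              \<and> attractive_points T C0 \<noteq> {}"
    by (intro exI[of _ "{x}"]) auto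
qed

end
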